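(* Let $\Sigma$ be a finite nonempty set of $d\times d$ real matrices with nonnegative entries. For each $i\in\{1,\dots,d\}$ let \[ \delta_i=\gcd\{n\ge1:\ \|\Sigma^n\|_{i,i}>0\}, \] with $\delta_i=1$ if this set is empty. Let $\Delta$ be a positive integer that is a multiple of every $\delta_i$. Then \[ \rho(\Sigma)=\lim_{m\to\infty}\max_i\sqrt[m\Delta]{\|\Sigma^{m\Delta}\|_{i,i}}=\lim_{m\to\infty}\max_{A_1,\dots,A_{m\Delta}\in\Sigma}\sqrt[m\Delta]{\operatorname{tr}(A_1\cdots A_{m\Delta})}. \]
   Context: For $n\ge1$, $\|\Sigma^n\|_{i,j}=\max_{A_1,\dots,A_n\in\Sigma}(A_1\cdots A_n)_{i,j}$. The joint spectral radius is $\rho(\Sigma)=\lim_{n\to\infty}\sqrt[n]{\max_{A_1,\dots,A_n\in\Sigma}\|A_1\cdots A_n\|}$ for any matrix norm (the limit exists and is independent of the norm). $\operatorname{tr}$ denotes the trace. *)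

theory Defs
  imports "HOL-Analysis.Analysis"
begin

definition mprod :: "(real^'n^'n) list \<Rightarrow> real^'n^'n" where
  "mprod As = foldr (\<lambda>A B. A ** B) As (mat 1)"

definition prods :: "(real^'n^'n) set \<Rightarrow> nat \<Rightarrow> (real^'n^'n) set" where
  "prods \<Sigma> n = mprod ` {As. set As \<subseteq> \<Sigma> \<and> length As = n}"

text \<open>The entry (i,j) of Sigma^n: max over products of length n.\<close>
definition maxentry :: "(real^'n^'n) set \<Rightarrow> nat \<Rightarrow> 'n \<Rightarrow> 'n \<Rightarrow> real" where
  "maxentry \<Sigma> n i j = Max ((\<lambda>P. P $ i $ j) ` prods \<Sigma> n)"

definition delta :: "(real^'n^'n) set \<Rightarrow> 'n \<Rightarrow> nat" where
  "delta \<Sigma> i = (let S = {n. n \<ge> 1 \<and> maxentry \<Sigma> n i i > 0} in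
                  if S = {} then 1 else Gcd S)"

text \<open>Joint spectral radius, w.r.t. the (Frobenius) norm of real^'n^'n, which is a
  matrix norm; the limit exists and is norm independent.\<close>
definition jsr :: "(real^'n^'n) set \<Rightarrow> real" where
  "jsr \<Sigma> = lim (\<lambda>n. root n (Max (norm ` prods \<Sigma> n)))"

end

theory Submission
  imports Defs
begin

text \<open>Let r be the supremum, over l \<ge> 1 and i, of the l-th root of the largest (i,i) entry of a
  product of length l. The return times to i form an additive semigroup of naturals, which
  contains all large multiples of its gcd \<delta>_i. Combining one such return with powers of a fixed
  return of length l shows that along multiples N of \<delta>_i the largest (i,i) entry is at least
  c \<rho>^N, where \<rho> is the l-th root of the largest (i,i) entry of length l. Hence the largest
  diagonal roots along multiples of \<Delta> tend to r, and so do the trace roots, since the trace lies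
  between the largest diagonal entry and d times it. It remains to identify r with the joint
  spectral radius. Submultiplicativity of the Frobenius norm makes r a lower bound for the n-th
  root of the largest norm of a product of length n. Conversely, if every diagonal entry of a
  product of length t is at most \<mu>^t, then splitting each walk at its last visit to its start
  vertex and inducting on the number of admissible vertices bounds the entries of products of
  length n by a polynomial in n times \<mu>^n.\<close>

section \<open>Additive semigroups of natural numbers\<close>

lemma add_closed_mult_mem:
  fixes T :: "nat set"
  assumes "0 \<in> T" and add: "\<And>a b. a \<in> T \<Longrightarrow> b \<in> T \<Longrightarrow> a + b \<in> T" and "a \<in> T"
  shows "k * a \<in> T"
  by (induction k) (simp_all add: assms)

text \<open>The least positive difference g of two elements of T divides every s \<in> T,
  because s mod g is again such a difference; hence g is the Gcd.\<close>
lemma add_closed_Gcd_gap: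
  fixes T :: "nat set"
  assumes "0 \<in> T" and add: "\<And>a b. a \<in> T \<Longrightarrow> b \<in> T \<Longrightarrow> a + b \<in> T"
  obtains b where "b \<in> T" and "b + Gcd T \<in> T"
proof (cases "T \<subseteq> {0}")
  case True
  then have "Gcd T = 0" by simp
  then show ?thesis using that[of 0] \<open>0 \<in> T\<close> by (metis add_0)
next
  case False
  define D where "D = {a - b | a b. a \<in> T \<and> b \<in> T \<and> b < a}"
  obtain t where "t \<in> T" "t > 0" using False by auto
  then have "t \<in> D" unfolding D_def using \<open>0 \<in> T\<close> by force
  define g where "g = (LEAST x. x \<in> D)"
  have "g \<in> D" unfolding g_def using \<open>t \<in> D\<close> by (rule LeastI)
  then obtain a b where "a \<in> T" "b \<in> T" "b < a" "g = a - b" unfolding D_def by auto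
  then have ab: "a \<in> T" "b \<in> T" "a = b + g" "g > 0" by auto
  have g_dvd: "g dvd s" if "s \<in> T" for s
  proof (rule ccontr)
    assume "\<not> g dvd s"
    then have r: "0 < s mod g" "s mod g < g" using ab by (auto simp: dvd_eq_mod_eq_0)
    have "s + (s div g) * b \<in> T" "(s div g) * a \<in> T"
      using that ab add add_closed_mult_mem[OF \<open>0 \<in> T\<close> add] by auto
    moreover have "s + (s div g) * b = (s div g) * a + s mod g"
      using div_mult_mod_eq[of s g] unfolding ab(3) by (simp add: algebra_simps)
    ultimately have "s mod g \<in> D" unfolding D_def using r(1) by force
    then show False using r(2) unfolding g_def by (meson Least_le not_le)
  qed
  have "Gcd T dvd (b + g) - b" using ab by (intro dvd_diff_nat Gcd_dvd) auto
  then have "Gcd T = g" using g_dvd ab(3) by (simp add: Gcd_greatest dvd_antisym)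
  then show ?thesis using that ab by simp
qed

text \<open>With b and b + g in T and b = \<beta> g, every q g with q at least \<beta> squared is
  (q div \<beta> - q mod \<beta>) b + (q mod \<beta>) (b + g); for \<beta> = 0 this still holds
  because q mod 0 = q.\<close>
lemma add_closed_large_multiples:
  fixes T :: "nat set"
  assumes "0 \<in> T" and add: "\<And>a b. a \<in> T \<Longrightarrow> b \<in> T \<Longrightarrow> a + b \<in> T"
    and "b \<in> T" and "b + g \<in> T" and "b = \<beta> * g" and "\<beta>\<^sup>2 \<le> q"
  shows "q * g \<in> T"
proof -
  have q_split: "(q div \<beta> - q mod \<beta>) * \<beta> + q mod \<beta> * (\<beta> + 1) = q"
  proof (cases "\<beta> = 0")
    case False
    have "\<beta> \<le> q div \<beta>"
      using \<open>\<beta>\<^sup>2 \<le> q\<close> False by (simp add: power2_eq_square div_le_mono[of "\<beta> * \<beta>" q \<beta>, simplified])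
    then have "q mod \<beta> \<le> q div \<beta>" using False by (meson le_trans less_imp_le mod_less_divisor not_gr0)
    then obtain z where z: "q div \<beta> = q mod \<beta> + z" using le_Suc_ex by blast
    have "(q div \<beta> - q mod \<beta>) * \<beta> + q mod \<beta> * (\<beta> + 1) = q div \<beta> * \<beta> + q mod \<beta>"
      unfolding z by (simp add: algebra_simps)
    then show ?thesis by simp
  qed simp
  have "q * g = ((q div \<beta> - q mod \<beta>) * \<beta> + q mod \<beta> * (\<beta> + 1)) * g"
    unfolding q_split ..
  also have "\<dots> = (q div \<beta> - q mod \<beta>) * b + q mod \<beta> * (b + g)"
    unfolding \<open>b = \<beta> * g\<close> by (simp add: algebra_simps)
  finally show ?thesis
    using add add_closed_mult_mem[OF \<open>0 \<in> T\<close> add] \<open>b \<in> T\<close> \<open>b + g \<in> T\<close> by simp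
qed

lemma add_closed_eventually_Gcd_multiples:
  fixes T :: "nat set"
  assumes "0 \<in> T" and add: "\<And>a b. a \<in> T \<Longrightarrow> b \<in> T \<Longrightarrow> a + b \<in> T"
  shows "eventually (\<lambda>n. Gcd T dvd n \<longrightarrow> n \<in> T) sequentially"
proof -
  obtain b where b: "b \<in> T" "b + Gcd T \<in> T" using add_closed_Gcd_gap[OF assms] .
  obtain \<beta> where \<beta>: "b = \<beta> * Gcd T"
    using Gcd_dvd[OF b(1)] by (metis dvd_def mult.commute)
  have "n \<in> T" if n: "\<beta>\<^sup>2 * Gcd T \<le> n" "Gcd T dvd n" for n
  proof (cases "Gcd T = 0")
    case True
    then show ?thesis using n \<open>0 \<in> T\<close> by (metis dvd_0_left)
  next
    case False
    obtain q where q: "n = q * Gcd T" using n(2) by (metis dvd_def mult.commute)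
    then have "\<beta>\<^sup>2 \<le> q" using n(1) False by simp
    then show ?thesis
      unfolding q using add_closed_large_multiples[OF assms b \<beta>] by simp
  qed
  then show ?thesis unfolding eventually_sequentially by blast
qed

lemma nat_decomp_window:
  fixes N N0 l :: nat
  assumes "N0 \<le> N" and "0 < l"
  obtains r k where "N = r + k * l" and "N0 \<le> r" and "r < N0 + l"
proof
  show "N = N0 + (N - N0) mod l + (N - N0) div l * l"
    using assms(1) div_mult_mod_eq[of "N - N0" l] by simp
qed (use assms(2) in simp_all)

section \<open>Products of matrices and the Frobenius norm\<close>

lemma mprod_Nil [simp]: "mprod [] = mat 1"
  by (simp add: mprod_def)

lemma mprod_Cons [simp]: "mprod (A # As) = A ** mprod As"
  by (simp add: mprod_def)

lemma mprod_append: "mprod (As @ Bs) = mprod As ** mprod Bs"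
  by (induction As) (simp_all add: matrix_mul_assoc)

lemma mprod_in_prods: "set As \<subseteq> \<Sigma> \<Longrightarrow> mprod As \<in> prods \<Sigma> (length As)"
  by (simp add: prods_def)

lemma prods_0: "prods \<Sigma> 0 = {mat 1}"
  by (auto simp: prods_def)

lemma prods_1: "prods \<Sigma> 1 = \<Sigma>"
proof -
  have "{As. set As \<subseteq> \<Sigma> \<and> length As = 1} = (\<lambda>A. [A]) ` \<Sigma>"
    by (auto simp: length_Suc_conv)
  then show ?thesis by (simp add: prods_def image_image)
qed

lemma matrix_mul_mem_prods:
  assumes "P \<in> prods \<Sigma> n" and "Q \<in> prods \<Sigma> m"
  shows "P ** Q \<in> prods \<Sigma> (n + m)"
proof -
  obtain As Bs where "set As \<subseteq> \<Sigma>" "length As = n" "P = mprod As"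
    and "set Bs \<subseteq> \<Sigma>" "length Bs = m" "Q = mprod Bs"
    using assms unfolding prods_def by auto
  then show ?thesis using mprod_in_prods[of "As @ Bs"] by (simp add: mprod_append)
qed

lemma prods_add_split:
  assumes "R \<in> prods \<Sigma> (n + m)"
  obtains P Q where "P \<in> prods \<Sigma> n" and "Q \<in> prods \<Sigma> m" and "R = P ** Q"
proof -
  obtain As where As: "set As \<subseteq> \<Sigma>" "length As = n + m" "R = mprod As"
    using assms unfolding prods_def by auto
  have "set (take n As) \<subseteq> \<Sigma>" "set (drop n As) \<subseteq> \<Sigma>"
    using As(1) set_take_subset set_drop_subset by (metis order_trans)+
  then have "mprod (take n As) \<in> prods \<Sigma> n" "mprod (drop n As) \<in> prods \<Sigma> m"
    using mprod_in_prods[of "take n As"] mprod_in_prods[of "drop n As"] As(2) by simp_all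
  moreover have "R = mprod (take n As) ** mprod (drop n As)"
    using As mprod_append[of "take n As" "drop n As"] by simp
  ultimately show ?thesis using that by blast
qed

lemma finite_prods: "finite \<Sigma> \<Longrightarrow> finite (prods \<Sigma> n)"
  unfolding prods_def by (simp add: finite_lists_length_eq)

lemma prods_nonempty: "\<Sigma> \<noteq> {} \<Longrightarrow> prods \<Sigma> n \<noteq> {}"
  using mprod_in_prods[of "replicate n A" \<Sigma> for A] by fastforce

lemma norm_matrix_power2:
  fixes A :: "real^'n^'m"
  shows "(norm A)\<^sup>2 = (\<Sum>i\<in>UNIV. \<Sum>j\<in>UNIV. (A$i$j)\<^sup>2)"
  by (simp add: norm_vec_def L2_set_def sum_nonneg)

lemma norm_matrix_mul_le:
  fixes A B :: "real^'n^'n"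
  shows "norm (A ** B) \<le> norm A * norm B"
proof (rule power2_le_imp_le)
  have "(norm (A ** B))\<^sup>2 = (\<Sum>i\<in>UNIV. \<Sum>j\<in>UNIV. (\<Sum>k\<in>UNIV. A$i$k * B$k$j)\<^sup>2)"
    by (simp add: norm_matrix_power2 matrix_matrix_mult_def)
  also have "\<dots> \<le> (\<Sum>i\<in>UNIV. \<Sum>j\<in>UNIV. (\<Sum>k\<in>UNIV. (A$i$k)\<^sup>2) * (\<Sum>k\<in>UNIV. (B$k$j)\<^sup>2))"
    by (intro sum_mono Cauchy_Schwarz_ineq_sum)
  also have "\<dots> = (\<Sum>i\<in>UNIV. \<Sum>k\<in>UNIV. (A$i$k)\<^sup>2) * (\<Sum>j\<in>UNIV. \<Sum>k\<in>UNIV. (B$k$j)\<^sup>2)"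
    by (simp add: sum_product)
  also have "(\<Sum>j\<in>UNIV. \<Sum>k\<in>UNIV. (B$k$j)\<^sup>2) = (\<Sum>k\<in>UNIV. \<Sum>j\<in>UNIV. (B$k$j)\<^sup>2)"
    by (rule sum.swap)
  also have "(\<Sum>i\<in>UNIV. \<Sum>k\<in>UNIV. (A$i$k)\<^sup>2) * (\<Sum>k\<in>UNIV. \<Sum>j\<in>UNIV. (B$k$j)\<^sup>2)
      = (norm A * norm B)\<^sup>2"
    by (simp only: power_mult_distrib norm_matrix_power2)
  finally show "(norm (A ** B))\<^sup>2 \<le> (norm A * norm B)\<^sup>2" .
qed simp

lemma abs_matrix_entry_le_norm:
  fixes A :: "real^'n^'m"
  shows "\<bar>A$i$j\<bar> \<le> norm A"
  using component_le_norm_cart[of "A$i" j] Finite_Cartesian_Product.norm_nth_le[of A i] by linarith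

lemma norm_matrix_le_sum_abs:
  fixes A :: "real^'n^'m"
  shows "norm A \<le> (\<Sum>i\<in>UNIV. \<Sum>j\<in>UNIV. \<bar>A$i$j\<bar>)"
proof -
  have "norm A \<le> (\<Sum>i\<in>UNIV. \<bar>norm (A$i)\<bar>)"
    unfolding norm_vec_def[of A] using L2_set_le_sum[of UNIV "\<lambda>i. norm (A$i)"] by simp
  also have "\<dots> \<le> (\<Sum>i\<in>UNIV. \<Sum>j\<in>UNIV. \<bar>A$i$j\<bar>)"
    using norm_le_l1_cart by (intro sum_mono) simp
  finally show ?thesis .
qed

section \<open>Growth of the diagonal entries\<close>

definition max_norm :: "(real^'n^'n) set \<Rightarrow> nat \<Rightarrow> real" where
  "max_norm \<Sigma> n = Max (norm ` prods \<Sigma> n)"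

definition diag_growth :: "(real^'n^'n) set \<Rightarrow> real" where
  "diag_growth \<Sigma> = Sup {root l (maxentry \<Sigma> l i i) | l i. l \<ge> 1}"

locale nonneg_matrix_set =
  fixes \<Sigma> :: "(real^'n^'n) set"
  assumes finite: "finite \<Sigma>" and nonempty: "\<Sigma> \<noteq> {}"
    and nonneg: "\<forall>A\<in>\<Sigma>. \<forall>i j. A $ i $ j \<ge> 0"
begin

lemma mprod_nonneg: "set As \<subseteq> \<Sigma> \<Longrightarrow> 0 \<le> mprod As $ i $ j"
  by (induction As arbitrary: i) (auto simp: mat_def matrix_matrix_mult_def nonneg intro!: sum_nonneg)

lemma prods_nonneg: "P \<in> prods \<Sigma> n \<Longrightarrow> 0 \<le> P $ i $ j"
  unfolding prods_def using mprod_nonneg by auto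

lemma maxentry_ge: "P \<in> prods \<Sigma> n \<Longrightarrow> P $ i $ j \<le> maxentry \<Sigma> n i j"
  unfolding maxentry_def using finite_prods[OF finite] by (intro Max_ge) auto

lemma maxentry_attained:
  obtains P where "P \<in> prods \<Sigma> n" and "P $ i $ j = maxentry \<Sigma> n i j"
proof -
  have "maxentry \<Sigma> n i j \<in> (\<lambda>P. P $ i $ j) ` prods \<Sigma> n"
    unfolding maxentry_def using finite_prods[OF finite] prods_nonempty[OF nonempty]
    by (intro Max_in) auto
  then show ?thesis using that by auto
qed

lemma maxentry_nonneg: "0 \<le> maxentry \<Sigma> n i j"
  by (metis maxentry_attained prods_nonneg)

lemma maxentry_0_diag: "maxentry \<Sigma> 0 i i = 1"
  unfolding maxentry_def by (simp add: prods_0 mat_def)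

lemma maxentry_mult_le: "maxentry \<Sigma> n i k * maxentry \<Sigma> m k j \<le> maxentry \<Sigma> (n + m) i j"
proof -
  obtain P Q where P: "P \<in> prods \<Sigma> n" "P $ i $ k = maxentry \<Sigma> n i k"
    and Q: "Q \<in> prods \<Sigma> m" "Q $ k $ j = maxentry \<Sigma> m k j"
    by (metis maxentry_attained)
  have "P $ i $ k * Q $ k $ j \<le> (\<Sum>l\<in>UNIV. P $ i $ l * Q $ l $ j)"
    using P Q prods_nonneg by (intro member_le_sum) auto
  also have "\<dots> = (P ** Q) $ i $ j" by (simp add: matrix_matrix_mult_def)
  also have "\<dots> \<le> maxentry \<Sigma> (n + m) i j"
    by (intro maxentry_ge matrix_mul_mem_prods P Q)
  finally show ?thesis using P Q by simp
qed

lemma maxentry_power_le: "maxentry \<Sigma> l i i ^ k \<le> maxentry \<Sigma> (k * l) i i"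
proof (induction k)
  case (Suc k)
  have "maxentry \<Sigma> l i i ^ Suc k \<le> maxentry \<Sigma> l i i * maxentry \<Sigma> (k * l) i i"
    using Suc maxentry_nonneg by (simp add: mult_left_mono)
  also have "\<dots> \<le> maxentry \<Sigma> (Suc k * l) i i"
    using maxentry_mult_le[of l i i "k * l" i] by simp
  finally show ?case .
qed (simp add: maxentry_0_diag)

lemma maxentry_mult_power_le:
  "maxentry \<Sigma> r i i * maxentry \<Sigma> l i i ^ k \<le> maxentry \<Sigma> (r + k * l) i i"
  using maxentry_power_le[of l i k] maxentry_nonneg maxentry_mult_le[of r i i "k * l" i]
  by (meson mult_left_mono order_trans)

lemma max_norm_ge: "P \<in> prods \<Sigma> n \<Longrightarrow> norm P \<le> max_norm \<Sigma> n"
  unfolding max_norm_def using finite_prods[OF finite] by (intro Max_ge) auto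

lemma max_norm_attained:
  obtains P where "P \<in> prods \<Sigma> n" and "max_norm \<Sigma> n = norm P"
proof -
  have "max_norm \<Sigma> n \<in> norm ` prods \<Sigma> n"
    unfolding max_norm_def using finite_prods[OF finite] prods_nonempty[OF nonempty]
    by (intro Max_in) auto
  then show ?thesis using that by auto
qed

lemma max_norm_nonneg: "0 \<le> max_norm \<Sigma> n"
  by (metis max_norm_attained norm_ge_zero)

lemma entry_le_max_norm_1: "A \<in> \<Sigma> \<Longrightarrow> A $ i $ j \<le> max_norm \<Sigma> 1"
  using abs_matrix_entry_le_norm[of A i j] max_norm_ge[of A 1] prods_1[of \<Sigma>] by force

lemma maxentry_le_max_norm: "maxentry \<Sigma> n i j \<le> max_norm \<Sigma> n"
  by (metis abs_matrix_entry_le_norm abs_le_D1 maxentry_attained max_norm_ge order_trans)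

lemma max_norm_add_le: "max_norm \<Sigma> (n + m) \<le> max_norm \<Sigma> n * max_norm \<Sigma> m"
proof -
  obtain R where R: "R \<in> prods \<Sigma> (n + m)" "max_norm \<Sigma> (n + m) = norm R"
    by (rule max_norm_attained)
  obtain P Q where "P \<in> prods \<Sigma> n" "Q \<in> prods \<Sigma> m" "R = P ** Q"
    using prods_add_split[OF R(1)] .
  then have "norm R \<le> norm P * norm Q" by (simp add: norm_matrix_mul_le)
  also have "\<dots> \<le> max_norm \<Sigma> n * max_norm \<Sigma> m"
    using \<open>P \<in> _\<close> \<open>Q \<in> _\<close> by (intro mult_mono max_norm_ge max_norm_nonneg norm_ge_zero)
  finally show ?thesis using R by simp
qed

lemma max_norm_mult_le: "k \<ge> 1 \<Longrightarrow> max_norm \<Sigma> (k * n) \<le> max_norm \<Sigma> n ^ k"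
proof (induction k rule: dec_induct)
  case (step k)
  have "max_norm \<Sigma> (Suc k * n) \<le> max_norm \<Sigma> n * max_norm \<Sigma> (k * n)"
    using max_norm_add_le[of n "k * n"] by simp
  also have "\<dots> \<le> max_norm \<Sigma> n ^ Suc k"
    using step max_norm_nonneg by (simp add: mult_left_mono)
  finally show ?case .
qed simp

lemma root_maxentry_le_max_norm_1: "l \<ge> 1 \<Longrightarrow> root l (maxentry \<Sigma> l i i) \<le> max_norm \<Sigma> 1"
proof -
  assume "l \<ge> 1"
  then have "root l (maxentry \<Sigma> l i i) \<le> root l (max_norm \<Sigma> 1 ^ l)"
    using order_trans[OF maxentry_le_max_norm max_norm_mult_le[of l 1]] by (intro real_root_le_mono) auto
  also have "\<dots> = max_norm \<Sigma> 1"
    using \<open>l \<ge> 1\<close> max_norm_nonneg by (simp add: real_root_power_cancel)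
  finally show ?thesis .
qed

lemma bdd_above_diag_roots: "bdd_above {root l (maxentry \<Sigma> l i i) | l i. l \<ge> 1}"
  using root_maxentry_le_max_norm_1 by (intro bdd_aboveI[of _ "max_norm \<Sigma> 1"]) blast

lemma root_maxentry_le_diag_growth: "l \<ge> 1 \<Longrightarrow> root l (maxentry \<Sigma> l i i) \<le> diag_growth \<Sigma>"
  unfolding diag_growth_def using bdd_above_diag_roots by (intro cSup_upper) blast+

lemma diag_growth_nonneg: "0 \<le> diag_growth \<Sigma>"
proof -
  fix i
  have "0 \<le> root 1 (maxentry \<Sigma> 1 i i)" by (simp add: maxentry_nonneg)
  also have "\<dots> \<le> diag_growth \<Sigma>" by (rule root_maxentry_le_diag_growth) simp
  finally show ?thesis .
qed

lemma maxentry_le_diag_growth_power: "maxentry \<Sigma> l i i \<le> diag_growth \<Sigma> ^ l"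
proof (cases "l = 0")
  case False
  then have "root l (maxentry \<Sigma> l i i) ^ l \<le> diag_growth \<Sigma> ^ l"
    using root_maxentry_le_diag_growth[of l i] maxentry_nonneg
    by (intro power_mono) (auto simp: real_root_ge_zero)
  then show ?thesis using False maxentry_nonneg by simp
qed (simp add: maxentry_0_diag)

lemma less_diag_growthE:
  assumes "b < diag_growth \<Sigma>"
  obtains l i where "l \<ge> 1" and "b < root l (maxentry \<Sigma> l i i)"
proof -
  have "{root l (maxentry \<Sigma> l i i) | l i. l \<ge> 1} \<noteq> {}" by blast
  then show ?thesis
    using assms that less_cSup_iff[OF _ bdd_above_diag_roots] unfolding diag_growth_def by blast
qed

lemma diag_growth_le_root_max_norm:
  assumes "n \<ge> 1"
  shows "diag_growth \<Sigma> \<le> root n (max_norm \<Sigma> n)"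
  unfolding diag_growth_def
proof (rule cSup_least)
  fix x assume "x \<in> {root l (maxentry \<Sigma> l i i) | l i. l \<ge> 1}"
  then obtain l i where l: "l \<ge> 1" and x: "x = root l (maxentry \<Sigma> l i i)" by blast
  have "x = root (l * n) (maxentry \<Sigma> l i i ^ n)"
    using assms maxentry_nonneg by (simp add: x real_root_mult_exp real_root_power_cancel)
  also have "\<dots> \<le> root (l * n) (max_norm \<Sigma> (l * n))"
    using maxentry_power_le[of l i n] maxentry_le_max_norm[of "l * n" i i] l assms
    by (intro real_root_le_mono) (auto simp: mult.commute)
  also have "\<dots> \<le> root (l * n) (max_norm \<Sigma> n ^ l)"
    using l assms by (intro real_root_le_mono max_norm_mult_le) auto
  also have "\<dots> = root n (max_norm \<Sigma> n)"
    using l assms max_norm_nonneg by (simp add: real_root_mult_exp real_root_power_cancel real_root_power)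
  finally show "x \<le> root n (max_norm \<Sigma> n)" .
qed blast

end

section \<open>Diagonal entries and traces along multiples of the periods\<close>

definition max_diag_root :: "(real^'n^'n) set \<Rightarrow> nat \<Rightarrow> real" where
  "max_diag_root \<Sigma> N = Max ((\<lambda>i. root N (maxentry \<Sigma> N i i)) ` UNIV)"

definition max_trace_root :: "(real^'n^'n) set \<Rightarrow> nat \<Rightarrow> real" where
  "max_trace_root \<Sigma> N = Max ((\<lambda>P. root N (trace P)) ` prods \<Sigma> N)"

context nonneg_matrix_set
begin

lemma delta_eq_Gcd_return_times:
  assumes "l \<ge> 1" and "0 < maxentry \<Sigma> l i i"
  shows "delta \<Sigma> i = Gcd {n. 0 < maxentry \<Sigma> n i i}"
proof -
  have "{n. 0 < maxentry \<Sigma> n i i} = insert 0 {n. n \<ge> 1 \<and> maxentry \<Sigma> n i i > 0}"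
    by (auto simp: maxentry_0_diag)
  then show ?thesis unfolding delta_def using assms by auto
qed

lemma eventually_return_time:
  assumes "l \<ge> 1" and "0 < maxentry \<Sigma> l i i"
  shows "eventually (\<lambda>n. delta \<Sigma> i dvd n \<longrightarrow> 0 < maxentry \<Sigma> n i i) sequentially"
proof -
  let ?T = "{n. 0 < maxentry \<Sigma> n i i}"
  have "0 \<in> ?T" by (simp add: maxentry_0_diag)
  moreover have "a + b \<in> ?T" if "a \<in> ?T" "b \<in> ?T" for a b
    using that maxentry_mult_le[of a i i b i] by (metis mem_Collect_eq mult_pos_pos less_le_trans)
  ultimately have "eventually (\<lambda>n. Gcd ?T dvd n \<longrightarrow> n \<in> ?T) sequentially"
    by (rule add_closed_eventually_Gcd_multiples)
  then show ?thesis by (simp add: delta_eq_Gcd_return_times[OF assms])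
qed

lemma delta_dvd_return_time:
  assumes "l \<ge> 1" and "0 < maxentry \<Sigma> l i i"
  shows "delta \<Sigma> i dvd l"
  using assms by (simp add: delta_eq_Gcd_return_times Gcd_dvd)

text \<open>Write N = r + k l with r in a window of length l beyond the threshold N0 of
  eventually_return_time; the finitely many r give the constant c.\<close>
lemma eventually_maxentry_diag_lower:
  assumes l: "l \<ge> 1" and pos: "0 < maxentry \<Sigma> l i i"
  obtains c where "c > 0" and "eventually (\<lambda>N. delta \<Sigma> i dvd N \<longrightarrow>
    c * root l (maxentry \<Sigma> l i i) ^ N \<le> maxentry \<Sigma> N i i) sequentially"
proof -
  define \<rho> where "\<rho> = root l (maxentry \<Sigma> l i i)"
  have \<rho>_pos: "\<rho> > 0" and \<rho>_pow: "\<rho> ^ l = maxentry \<Sigma> l i i"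
    using l pos by (simp_all add: \<rho>_def)
  obtain N0 where N0: "\<And>n. n \<ge> N0 \<Longrightarrow> delta \<Sigma> i dvd n \<Longrightarrow> 0 < maxentry \<Sigma> n i i"
    using eventually_return_time[OF l pos] unfolding eventually_sequentially by blast
  define R where "R = {r. N0 \<le> r \<and> r < N0 + l \<and> delta \<Sigma> i dvd r}"
  define c where "c = Min (insert 1 ((\<lambda>r. maxentry \<Sigma> r i i / \<rho> ^ r) ` R))"
  have "finite R" unfolding R_def by simp
  then have "c > 0"
    unfolding c_def using N0 \<rho>_pos by (subst Min_gr_iff) (auto simp: R_def)
  have c_le: "c * \<rho> ^ r \<le> maxentry \<Sigma> r i i" if "r \<in> R" for r
  proof -
    have "c \<le> maxentry \<Sigma> r i i / \<rho> ^ r"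
      unfolding c_def using \<open>finite R\<close> that by (intro Min_le) auto
    then show ?thesis using \<rho>_pos by (simp add: pos_le_divide_eq)
  qed
  have "c * \<rho> ^ N \<le> maxentry \<Sigma> N i i" if "N \<ge> N0" and "delta \<Sigma> i dvd N" for N
  proof -
    obtain r k where N_eq: "N = r + k * l" and r: "N0 \<le> r" "r < N0 + l"
      using nat_decomp_window[OF \<open>N \<ge> N0\<close>, of l] l by auto
    have "delta \<Sigma> i dvd r"
      using \<open>delta \<Sigma> i dvd N\<close> delta_dvd_return_time[OF l pos] N_eq
      by (metis dvd_add_left_iff dvd_mult)
    then have "r \<in> R" unfolding R_def using r by simp
    have "c * \<rho> ^ N = c * \<rho> ^ r * maxentry \<Sigma> l i i ^ k"
      unfolding N_eq \<rho>_pow[symmetric] by (simp add: power_add power_mult mult.commute[of k l])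
    also have "\<dots> \<le> maxentry \<Sigma> r i i * maxentry \<Sigma> l i i ^ k"
      using c_le[OF \<open>r \<in> R\<close>] maxentry_nonneg by (intro mult_right_mono) auto
    also have "\<dots> \<le> maxentry \<Sigma> N i i"
      unfolding N_eq by (rule maxentry_mult_power_le)
    finally show ?thesis .
  qed
  then show ?thesis
    using that \<open>c > 0\<close> unfolding \<rho>_def eventually_sequentially by blast
qed

lemma root_maxentry_le_max_diag_root: "root N (maxentry \<Sigma> N i i) \<le> max_diag_root \<Sigma> N"
  unfolding max_diag_root_def by (intro Max_ge) auto

lemma max_diag_root_attained:
  obtains i where "max_diag_root \<Sigma> N = root N (maxentry \<Sigma> N i i)"
proof -
  have "max_diag_root \<Sigma> N \<in> (\<lambda>i. root N (maxentry \<Sigma> N i i)) ` UNIV"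
    unfolding max_diag_root_def by (intro Max_in) auto
  then show ?thesis using that by auto
qed

lemma max_diag_root_nonneg: "0 \<le> max_diag_root \<Sigma> N"
  by (metis max_diag_root_attained maxentry_nonneg real_root_ge_zero)

lemma max_diag_root_le_diag_growth: "N \<ge> 1 \<Longrightarrow> max_diag_root \<Sigma> N \<le> diag_growth \<Sigma>"
  by (metis max_diag_root_attained root_maxentry_le_diag_growth)

lemma eventually_less_max_diag_root:
  assumes "b < diag_growth \<Sigma>" and g: "filterlim g sequentially F"
    and dvd: "\<And>x i. delta \<Sigma> i dvd g x"
  shows "eventually (\<lambda>x. b < max_diag_root \<Sigma> (g x)) F"
proof -
  obtain l i where l: "l \<ge> 1" and b: "b < root l (maxentry \<Sigma> l i i)"
    using less_diag_growthE[OF assms(1)] .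
  show ?thesis
  proof (cases "0 < maxentry \<Sigma> l i i")
    case False
    then have "b < 0" using b maxentry_nonneg[of l i i] by simp
    then show ?thesis using max_diag_root_nonneg by (intro always_eventually allI) (meson less_le_trans)
  next
    case True
    define \<rho> where "\<rho> = root l (maxentry \<Sigma> l i i)"
    have "\<rho> \<ge> 0" unfolding \<rho>_def using real_root_ge_zero maxentry_nonneg by blast
    obtain c where "c > 0" and c: "eventually (\<lambda>N. delta \<Sigma> i dvd N \<longrightarrow>
        c * \<rho> ^ N \<le> maxentry \<Sigma> N i i) sequentially"
      using eventually_maxentry_diag_lower[OF l True] unfolding \<rho>_def by blast
    have "((\<lambda>x. root (g x) c * \<rho>) \<longlongrightarrow> 1 * \<rho>) F"
      using filterlim_compose[OF LIMSEQ_root_const[OF \<open>c > 0\<close>] g] by (intro tendsto_mult) auto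
    then have "eventually (\<lambda>x. b < root (g x) c * \<rho>) F"
      using b unfolding \<rho>_def by (intro order_tendstoD(1)) auto
    moreover have "eventually (\<lambda>x. c * \<rho> ^ g x \<le> maxentry \<Sigma> (g x) i i) F"
      using eventually_compose_filterlim[OF c g] dvd by simp
    moreover have "eventually (\<lambda>x. g x \<ge> 1) F"
      using eventually_compose_filterlim[OF eventually_ge_at_top g] .
    ultimately show ?thesis
    proof eventually_elim
      case (elim x)
      have "root (g x) c * \<rho> = root (g x) (c * \<rho> ^ g x)"
        using elim \<open>\<rho> \<ge> 0\<close> by (simp add: real_root_mult real_root_power_cancel)
      also have "\<dots> \<le> root (g x) (maxentry \<Sigma> (g x) i i)"
        using elim by (intro real_root_le_mono) auto
      also have "\<dots> \<le> max_diag_root \<Sigma> (g x)"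
        by (rule root_maxentry_le_max_diag_root)
      finally show ?case using elim by simp
    qed
  qed
qed

lemma max_diag_root_tendsto:
  assumes g: "filterlim g sequentially F" and dvd: "\<And>x i. delta \<Sigma> i dvd g x"
  shows "((\<lambda>x. max_diag_root \<Sigma> (g x)) \<longlongrightarrow> diag_growth \<Sigma>) F"
proof (rule order_tendstoI)
  fix b
  assume "diag_growth \<Sigma> < b"
  moreover have "eventually (\<lambda>x. g x \<ge> 1) F"
    using eventually_compose_filterlim[OF eventually_ge_at_top g] .
  ultimately show "eventually (\<lambda>x. max_diag_root \<Sigma> (g x) < b) F"
    by (elim eventually_mono) (meson max_diag_root_le_diag_growth le_less_trans)
qed (rule eventually_less_max_diag_root[OF _ g dvd])

lemma max_diag_root_le_max_trace_root: "max_diag_root \<Sigma> N \<le> max_trace_root \<Sigma> N"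
proof -
  obtain i where i: "max_diag_root \<Sigma> N = root N (maxentry \<Sigma> N i i)"
    by (rule max_diag_root_attained)
  obtain P where P: "P \<in> prods \<Sigma> N" "P $ i $ i = maxentry \<Sigma> N i i"
    by (rule maxentry_attained)
  have "P $ i $ i \<le> trace P"
    unfolding trace_def using prods_nonneg[OF P(1)] by (intro member_le_sum) auto
  then have "root N (maxentry \<Sigma> N i i) \<le> root N (trace P)"
    using P(2) by (cases "N = 0") (auto intro: real_root_le_mono)
  also have "\<dots> \<le> max_trace_root \<Sigma> N"
    unfolding max_trace_root_def using finite_prods[OF finite] P(1) by (intro Max_ge) auto
  finally show ?thesis using i by simp
qed

lemma max_trace_root_le:
  assumes "N > 0"
  shows "max_trace_root \<Sigma> N \<le> root N (CARD('n)) * max_diag_root \<Sigma> N"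
proof -
  have "max_trace_root \<Sigma> N \<in> (\<lambda>P. root N (trace P)) ` prods \<Sigma> N"
    unfolding max_trace_root_def using finite_prods[OF finite] prods_nonempty[OF nonempty]
    by (intro Max_in) auto
  then obtain P where P: "P \<in> prods \<Sigma> N" "max_trace_root \<Sigma> N = root N (trace P)" by auto
  have "P $ i $ i \<le> max_diag_root \<Sigma> N ^ N" for i
  proof -
    have "P $ i $ i \<le> root N (maxentry \<Sigma> N i i) ^ N"
      using maxentry_ge[OF P(1)] maxentry_nonneg assms by simp
    also have "\<dots> \<le> max_diag_root \<Sigma> N ^ N"
      by (intro power_mono root_maxentry_le_max_diag_root real_root_ge_zero maxentry_nonneg)
    finally show ?thesis .
  qed
  then have "trace P \<le> (\<Sum>i\<in>(UNIV::'n set). max_diag_root \<Sigma> N ^ N)"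
    unfolding trace_def by (intro sum_mono)
  then have "trace P \<le> CARD('n) * max_diag_root \<Sigma> N ^ N"
    by simp
  then have "root N (trace P) \<le> root N (CARD('n) * max_diag_root \<Sigma> N ^ N)"
    using assms by (intro real_root_le_mono) auto
  also have "\<dots> = root N (CARD('n)) * max_diag_root \<Sigma> N"
    using assms max_diag_root_nonneg by (simp add: real_root_mult real_root_power_cancel)
  finally show ?thesis using P(2) by simp
qed

lemma max_trace_root_tendsto:
  assumes g: "filterlim g sequentially F" and dvd: "\<And>x i. delta \<Sigma> i dvd g x"
  shows "((\<lambda>x. max_trace_root \<Sigma> (g x)) \<longlongrightarrow> diag_growth \<Sigma>) F"
proof (rule tendsto_sandwich)
  show "((\<lambda>x. max_diag_root \<Sigma> (g x)) \<longlongrightarrow> diag_growth \<Sigma>) F"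
    using g dvd by (rule max_diag_root_tendsto)
  have "((\<lambda>x. root (g x) (CARD('n)) * max_diag_root \<Sigma> (g x)) \<longlongrightarrow> 1 * diag_growth \<Sigma>) F"
    using filterlim_compose[OF LIMSEQ_root_const g] max_diag_root_tendsto[OF g dvd]
    by (intro tendsto_mult) auto
  then show "((\<lambda>x. root (g x) (CARD('n)) * max_diag_root \<Sigma> (g x)) \<longlongrightarrow> diag_growth \<Sigma>) F"
    by simp
  show "eventually (\<lambda>x. max_diag_root \<Sigma> (g x) \<le> max_trace_root \<Sigma> (g x)) F"
    by (simp add: max_diag_root_le_max_trace_root)
  show "eventually (\<lambda>x. max_trace_root \<Sigma> (g x) \<le> root (g x) (CARD('n)) * max_diag_root \<Sigma> (g x)) F"
    using eventually_compose_filterlim[OF eventually_gt_at_top[of 0] g]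
    by (elim eventually_mono) (rule max_trace_root_le)
qed

end

section \<open>Walks and the upper bound on norms\<close>

text \<open>walk_sum [A_1, ..., A_n] F s j is the sum of A_1(k_0, k_1) * ... * A_n(k_(n-1), k_n)
  over all walks s = k_0, k_1, ..., k_n = j that never visit F.\<close>
primrec walk_sum :: "(real^'n^'n) list \<Rightarrow> 'n set \<Rightarrow> 'n \<Rightarrow> 'n \<Rightarrow> real" where
  "walk_sum [] F s j = (if s = j \<and> s \<notin> F then 1 else 0)"
| "walk_sum (A # As) F s j = (if s \<in> F then 0 else (\<Sum>k\<in>UNIV. A $ s $ k * walk_sum As F k j))"

lemma walk_sum_empty_set: "walk_sum As {} s j = mprod As $ s $ j"
  by (induction As arbitrary: s) (auto simp: matrix_matrix_mult_def mat_def)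

lemma walk_sum_start_in: "s \<in> F \<Longrightarrow> walk_sum As F s j = 0"
  by (cases As) auto

lemma walk_sum_nonneg: "\<forall>A\<in>set As. \<forall>i j. 0 \<le> A $ i $ j \<Longrightarrow> 0 \<le> walk_sum As F s j"
  by (induction As arbitrary: s) (auto intro!: sum_nonneg)

lemma walk_sum_le_mprod:
  assumes "\<forall>A\<in>set As. \<forall>i j. 0 \<le> A $ i $ j"
  shows "walk_sum As F s j \<le> mprod As $ s $ j"
  using assms
proof (induction As arbitrary: s)
  case (Cons A As)
  then show ?case
    using walk_sum_nonneg[of "A # As" "{}"] walk_sum_empty_set[of "A # As"]
    by (auto intro!: sum_mono mult_left_mono simp: walk_sum_empty_set matrix_matrix_mult_def)
qed (simp add: mat_def)

text \<open>The factor, from time t on, of the walks whose last visit to i is at time t.\<close>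
definition last_visit_tail :: "(real^'n^'n) list \<Rightarrow> 'n set \<Rightarrow> 'n \<Rightarrow> 'n \<Rightarrow> nat \<Rightarrow> real" where
  "last_visit_tail As F i j t = (if t = length As then (if i = j then 1 else 0)
     else (\<Sum>k\<in>UNIV. As ! t $ i $ k * walk_sum (drop (Suc t) As) (insert i F) k j))"

lemma last_visit_tail_Cons_0:
  "last_visit_tail (A # As) F i j 0 = (\<Sum>k\<in>UNIV. A $ i $ k * walk_sum As (insert i F) k j)"
  by (simp add: last_visit_tail_def)

lemma last_visit_tail_Cons_Suc:
  "last_visit_tail (A # As) F i j (Suc t) = last_visit_tail As F i j t"
  by (simp add: last_visit_tail_def)

lemma walk_sum_last_visit_decomp:
  "walk_sum As F s j = walk_sum As (insert i F) s j
     + (\<Sum>t\<le>length As. walk_sum (take t As) F s i * last_visit_tail As F i j t)"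
proof (induction As arbitrary: s)
  case Nil
  then show ?case by (auto simp: last_visit_tail_def)
next
  case (Cons A As)
  show ?case
  proof (cases "s \<in> F")
    case True
    then show ?thesis by (simp add: walk_sum_start_in)
  next
    case False
    let ?tail = "\<lambda>t. last_visit_tail As F i j t"
    have "walk_sum (A # As) F s j = (\<Sum>k\<in>UNIV. A $ s $ k * walk_sum As (insert i F) k j)
        + (\<Sum>k\<in>UNIV. \<Sum>t\<le>length As. A $ s $ k * walk_sum (take t As) F k i * ?tail t)"
      using False by (simp add: Cons.IH distrib_left sum.distrib sum_distrib_left mult.assoc)
    also have "(\<Sum>k\<in>UNIV. \<Sum>t\<le>length As. A $ s $ k * walk_sum (take t As) F k i * ?tail t)
        = (\<Sum>t\<le>length As. walk_sum (take (Suc t) (A # As)) F s i * ?tail t)"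
      using False by (subst sum.swap) (simp add: sum_distrib_right)
    finally show ?thesis
      using False
      by (simp add: sum.atMost_Suc_shift last_visit_tail_Cons_0 last_visit_tail_Cons_Suc
          del: sum.atMost_Suc)
  qed
qed

lemma LIMSEQ_root_plus_1: "(\<lambda>n. root n (real n + 1)) \<longlonglongrightarrow> 1"
proof (rule tendsto_sandwich)
  show "eventually (\<lambda>n. 1 \<le> root n (real n + 1)) sequentially"
    using eventually_gt_at_top[of 0] by eventually_elim simp
  show "eventually (\<lambda>n. root n (real n + 1) \<le> root n 2 * root n (real n)) sequentially"
    using eventually_gt_at_top[of 0] by eventually_elim (simp add: real_root_mult[symmetric])
  show "(\<lambda>n. root n 2 * root n (real n)) \<longlonglongrightarrow> 1"
    using tendsto_mult[OF LIMSEQ_root_const LIMSEQ_root] by simp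
qed simp

context nonneg_matrix_set
begin

lemma last_visit_tail_nonneg:
  assumes "set As \<subseteq> \<Sigma>" and "t \<le> length As"
  shows "0 \<le> last_visit_tail As F i j t"
proof (cases "t = length As")
  case False
  then have "As ! t \<in> \<Sigma>" and "\<forall>A\<in>set (drop (Suc t) As). \<forall>i j. 0 \<le> A $ i $ j"
    using assms nonneg by (auto dest: in_set_dropD)
  then show ?thesis
    using False nonneg
    by (auto simp: last_visit_tail_def intro!: sum_nonneg mult_nonneg_nonneg walk_sum_nonneg)
qed (simp add: last_visit_tail_def)

lemma last_visit_tail_le_walk_sum:
  assumes "set As \<subseteq> \<Sigma>" and "t < length As"
    and "\<And>k. walk_sum (drop (Suc t) As) (insert i F) k j \<le> W"
  shows "last_visit_tail As F i j t \<le> CARD('n) * max_norm \<Sigma> 1 * W"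
proof -
  have "As ! t \<in> \<Sigma>" and nonneg_drop: "\<forall>A\<in>set (drop (Suc t) As). \<forall>i j. 0 \<le> A $ i $ j"
    using assms(1,2) nonneg by (auto dest: in_set_dropD)
  have "last_visit_tail As F i j t
      = (\<Sum>k\<in>UNIV. As ! t $ i $ k * walk_sum (drop (Suc t) As) (insert i F) k j)"
    using assms(2) by (simp add: last_visit_tail_def)
  also have "\<dots> \<le> (\<Sum>k\<in>(UNIV::'n set). max_norm \<Sigma> 1 * W)"
    using entry_le_max_norm_1[OF \<open>As ! t \<in> \<Sigma>\<close>] max_norm_nonneg assms(3)
      walk_sum_nonneg[OF nonneg_drop]
    by (intro sum_mono mult_mono) auto
  finally show ?thesis by simp
qed

context
  fixes \<mu> :: real
  assumes \<mu>_pos: "\<mu> > 0"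
    and diag_le: "\<And>As s. set As \<subseteq> \<Sigma> \<Longrightarrow> mprod As $ s $ s \<le> \<mu> ^ length As"
begin

lemma last_visit_tail_le:
  assumes As: "set As \<subseteq> \<Sigma>" "t \<le> length As" and "B \<ge> 1"
    and walk_le: "\<And>Bs k. set Bs \<subseteq> \<Sigma> \<Longrightarrow>
      walk_sum Bs (insert s F) k j \<le> B * (real (length Bs) + 1) ^ r * \<mu> ^ length Bs"
  shows "\<mu> ^ t * last_visit_tail As F s j t
    \<le> (1 + CARD('n) * max_norm \<Sigma> 1 / \<mu>) * B * (real (length As) + 1) ^ r * \<mu> ^ length As"
proof -
  define c where "c = CARD('n) * max_norm \<Sigma> 1 / \<mu>"
  have "c \<ge> 0" unfolding c_def using max_norm_nonneg \<mu>_pos by simp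
  show ?thesis
  proof (cases "t = length As")
    case True
    have "\<mu> ^ t * last_visit_tail As F s j t \<le> 1 * 1 * 1 * \<mu> ^ length As"
      using True \<mu>_pos by (simp add: last_visit_tail_def)
    also have "\<dots> \<le> (1 + c) * B * (real (length As) + 1) ^ r * \<mu> ^ length As"
      using \<open>B \<ge> 1\<close> \<open>c \<ge> 0\<close> \<mu>_pos by (intro mult_mono) auto
    finally show ?thesis unfolding c_def .
  next
    case False
    define p where "p = length As - Suc t"
    have n_eq: "length As = t + 1 + p" unfolding p_def using As(2) False by simp
    have drop: "set (drop (Suc t) As) \<subseteq> \<Sigma>" "length (drop (Suc t) As) = p"
      using As(1) set_drop_subset[of "Suc t" As] by (auto simp: p_def)
    have "last_visit_tail As F s j t \<le> CARD('n) * max_norm \<Sigma> 1 * (B * (real p + 1) ^ r * \<mu> ^ p)"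
      using As False walk_le[OF drop(1)] drop(2) by (intro last_visit_tail_le_walk_sum) auto
    then have "\<mu> ^ t * last_visit_tail As F s j t \<le> \<mu> ^ t * (c * B * (real p + 1) ^ r * \<mu> ^ (p + 1))"
      using \<mu>_pos by (intro mult_left_mono) (auto simp: c_def field_simps)
    also have "\<dots> = c * B * (real p + 1) ^ r * \<mu> ^ length As"
      unfolding n_eq by (simp add: power_add ac_simps)
    also have "\<dots> \<le> (1 + c) * B * (real (length As) + 1) ^ r * \<mu> ^ length As"
      using \<open>B \<ge> 1\<close> \<open>c \<ge> 0\<close> \<mu>_pos n_eq by (intro mult_mono power_mono) auto
    finally show ?thesis unfolding c_def .
  qed
qed

lemma walk_sum_le_sum_last_visit:
  assumes "s \<notin> F" and "set As \<subseteq> \<Sigma>"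
  shows "walk_sum As F s j \<le> (\<Sum>t\<le>length As. \<mu> ^ t * last_visit_tail As F s j t)"
proof -
  have "walk_sum As F s j = (\<Sum>t\<le>length As. walk_sum (take t As) F s s * last_visit_tail As F s j t)"
    using walk_sum_last_visit_decomp[of As F s j s] by (simp add: walk_sum_start_in)
  also have "\<dots> \<le> (\<Sum>t\<le>length As. \<mu> ^ t * last_visit_tail As F s j t)"
  proof (intro sum_mono mult_right_mono)
    fix t
    assume "t \<in> {..length As}"
    have "set (take t As) \<subseteq> \<Sigma>" using assms(2) set_take_subset by (metis order_trans)
    then have "walk_sum (take t As) F s s \<le> mprod (take t As) $ s $ s"
      using nonneg by (intro walk_sum_le_mprod) auto
    also have "\<dots> \<le> \<mu> ^ t"
      using diag_le[OF \<open>set (take t As) \<subseteq> \<Sigma>\<close>] \<open>t \<in> {..length As}\<close> by simp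
    finally show "walk_sum (take t As) F s s \<le> \<mu> ^ t" .
    show "0 \<le> last_visit_tail As F s j t"
      using assms(2) \<open>t \<in> {..length As}\<close> by (intro last_visit_tail_nonneg) auto
  qed
  finally show ?thesis .
qed

lemma walk_sum_le:
  assumes "card (- F) \<le> r" and "set As \<subseteq> \<Sigma>"
  shows "walk_sum As F s j
    \<le> (1 + CARD('n) * max_norm \<Sigma> 1 / \<mu>) ^ r * (real (length As) + 1) ^ r * \<mu> ^ length As"
  using assms
proof (induction r arbitrary: F As s j)
  case 0
  then have "s \<in> F" by (auto simp: card_eq_0_iff)
  then show ?case using \<mu>_pos by (simp add: walk_sum_start_in)
next
  case (Suc r)
  let ?K = "1 + CARD('n) * max_norm \<Sigma> 1 / \<mu>" and ?n = "length As"
  have "?K \<ge> 1" using max_norm_nonneg \<mu>_pos by simp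
  show ?case
  proof (cases "s \<in> F")
    case True
    then show ?thesis using \<open>?K \<ge> 1\<close> \<mu>_pos by (simp add: walk_sum_start_in)
  next
    case False
    then have card: "card (- insert s F) \<le> r"
      using Suc.prems(1) by (simp add: Compl_insert card_Diff_singleton)
    have "walk_sum As F s j \<le> (\<Sum>t\<le>?n. \<mu> ^ t * last_visit_tail As F s j t)"
      using False Suc.prems(2) by (rule walk_sum_le_sum_last_visit)
    also have "\<dots> \<le> (\<Sum>t\<le>?n. ?K * ?K ^ r * (real ?n + 1) ^ r * \<mu> ^ ?n)"
      using Suc.prems(2) \<open>?K \<ge> 1\<close> Suc.IH[OF card]
      by (intro sum_mono last_visit_tail_le) auto
    also have "\<dots> = ?K ^ Suc r * (real ?n + 1) ^ Suc r * \<mu> ^ ?n"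
      by simp
    finally show ?thesis .
  qed
qed

lemma max_norm_le_poly:
  "max_norm \<Sigma> n \<le> CARD('n)\<^sup>2 * (1 + CARD('n) * max_norm \<Sigma> 1 / \<mu>) ^ CARD('n)
    * (real n + 1) ^ CARD('n) * \<mu> ^ n"
proof -
  let ?b = "(1 + CARD('n) * max_norm \<Sigma> 1 / \<mu>) ^ CARD('n) * (real n + 1) ^ CARD('n) * \<mu> ^ n"
  obtain P where P: "P \<in> prods \<Sigma> n" "max_norm \<Sigma> n = norm P"
    by (rule max_norm_attained)
  then obtain As where As: "set As \<subseteq> \<Sigma>" "length As = n" "P = mprod As"
    unfolding prods_def by auto
  have "\<bar>P $ i $ j\<bar> \<le> ?b" for i j
  proof -
    have "\<bar>P $ i $ j\<bar> = walk_sum As {} i j"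
      using As prods_nonneg[OF P(1)] by (simp add: walk_sum_empty_set)
    also have "\<dots> \<le> ?b"
      using walk_sum_le[of "{}" "CARD('n)" As] As by simp
    finally show ?thesis .
  qed
  then have "norm P \<le> (\<Sum>i\<in>(UNIV::'n set). \<Sum>j\<in>(UNIV::'n set). ?b)"
    using norm_matrix_le_sum_abs[of P] by (meson order_trans sum_mono)
  then show ?thesis using P(2) by (simp add: power2_eq_square mult.assoc)
qed

end

lemma max_norm_le_poly_diag_growth:
  assumes "diag_growth \<Sigma> < \<mu>"
  shows "max_norm \<Sigma> n \<le> CARD('n)\<^sup>2 * (1 + CARD('n) * max_norm \<Sigma> 1 / \<mu>) ^ CARD('n)
    * (real n + 1) ^ CARD('n) * \<mu> ^ n"
proof (rule max_norm_le_poly)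
  show "\<mu> > 0" using assms diag_growth_nonneg by linarith
  fix As s
  assume "set As \<subseteq> \<Sigma>"
  then have "mprod As $ s $ s \<le> maxentry \<Sigma> (length As) s s"
    by (intro maxentry_ge mprod_in_prods)
  also have "\<dots> \<le> diag_growth \<Sigma> ^ length As"
    by (rule maxentry_le_diag_growth_power)
  also have "\<dots> \<le> \<mu> ^ length As"
    using assms diag_growth_nonneg by (intro power_mono) auto
  finally show "mprod As $ s $ s \<le> \<mu> ^ length As" .
qed

lemma root_max_norm_tendsto: "(\<lambda>n. root n (max_norm \<Sigma> n)) \<longlonglongrightarrow> diag_growth \<Sigma>"
proof (rule order_tendstoI)
  fix b
  assume "b < diag_growth \<Sigma>"
  show "eventually (\<lambda>n. b < root n (max_norm \<Sigma> n)) sequentially"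
    using eventually_ge_at_top[of 1]
    by eventually_elim (use \<open>b < diag_growth \<Sigma>\<close> diag_growth_le_root_max_norm in fastforce)
next
  fix b
  assume "diag_growth \<Sigma> < b"
  define \<mu> where "\<mu> = (diag_growth \<Sigma> + b) / 2"
  have "diag_growth \<Sigma> < \<mu>" "\<mu> < b" "\<mu> > 0"
    using \<open>diag_growth \<Sigma> < b\<close> diag_growth_nonneg by (auto simp: \<mu>_def)
  define C where "C = CARD('n)\<^sup>2 * (1 + CARD('n) * max_norm \<Sigma> 1 / \<mu>) ^ CARD('n)"
  have "C > 0" unfolding C_def using max_norm_nonneg \<open>\<mu> > 0\<close> by (simp add: add_pos_nonneg)
  have "(\<lambda>n. root n C * root n (real n + 1) ^ CARD('n) * \<mu>) \<longlonglongrightarrow> 1 * 1 ^ CARD('n) * \<mu>"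
    by (intro tendsto_intros LIMSEQ_root_const LIMSEQ_root_plus_1 \<open>C > 0\<close>)
  then have "eventually (\<lambda>n. root n C * root n (real n + 1) ^ CARD('n) * \<mu> < b) sequentially"
    using \<open>\<mu> < b\<close> by (intro order_tendstoD(2)) auto
  then show "eventually (\<lambda>n. root n (max_norm \<Sigma> n) < b) sequentially"
    using eventually_gt_at_top[of 0]
  proof eventually_elim
    case (elim n)
    have "root n (max_norm \<Sigma> n) \<le> root n (C * (real n + 1) ^ CARD('n) * \<mu> ^ n)"
      using max_norm_le_poly_diag_growth[OF \<open>diag_growth \<Sigma> < \<mu>\<close>] elim
      by (intro real_root_le_mono) (auto simp: C_def)
    also have "\<dots> = root n C * root n (real n + 1) ^ CARD('n) * \<mu>"
      using elim \<open>\<mu> > 0\<close> by (simp add: real_root_mult real_root_power real_root_power_cancel)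
    finally show ?case using elim by simp
  qed
qed

lemma jsr_eq_diag_growth: "jsr \<Sigma> = diag_growth \<Sigma>"
  unfolding jsr_def max_norm_def[symmetric] using root_max_norm_tendsto by (rule limI)

end

theorem proposition2:
  fixes \<Sigma> :: "(real^'n^'n) set" and \<Delta> :: nat
  assumes "finite \<Sigma>" and "\<Sigma> \<noteq> {}"
    and "\<forall>A\<in>\<Sigma>. \<forall>i j. A $ i $ j \<ge> 0"
    and "\<Delta> > 0" and "\<forall>i. delta \<Sigma> i dvd \<Delta>"
  shows "((\<lambda>m. Max ((\<lambda>i. root (m * \<Delta>) (maxentry \<Sigma> (m * \<Delta>) i i)) ` UNIV))
           \<longlonglongrightarrow> jsr \<Sigma>)
       \<and> ((\<lambda>m. Max ((\<lambda>P. root (m * \<Delta>) (trace P)) ` prods \<Sigma> (m * \<Delta>)))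
           \<longlonglongrightarrow> jsr \<Sigma>)"
proof -
  interpret nonneg_matrix_set \<Sigma>
    using assms(1-3) by unfold_locales
  have mult_\<Delta>: "filterlim (\<lambda>m. m * \<Delta>) sequentially sequentially"
    using mult_nat_right_at_top[OF assms(4)] by simp
  have dvd: "delta \<Sigma> i dvd m * \<Delta>" for m i
    using assms(5) by simp
  show ?thesis
    using max_diag_root_tendsto[OF mult_\<Delta> dvd] max_trace_root_tendsto[OF mult_\<Delta> dvd]
    unfolding jsr_eq_diag_growth max_diag_root_def max_trace_root_def by simp
qed

end
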